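(* Let $\mathcal{A}$ be the greedy algorithm. Then for every $\ell\in[n]$, $$\mathbb{E}[v(\mathcal{A}(U^{\le\ell}))]\ \ge\ \alpha_\ell\,\frac{\ell}{n}\,v(\mathrm{OPT}),\qquad \alpha_\ell=1-\frac{\ell}{en}-\frac{1}{ek}.$$
   Context: Let $U$ be a finite ground set of $n$ items and $k\ge1$ an integer. Let $v\colon 2^U\to\mathbb{R}_{\ge0}$ be monotone and submodular, and $\mathrm{OPT}\in\arg\max\{v(S): S\subseteq U, |S|\le k\}$. The items arrive one per round in a uniformly random order; $U^{\le \ell}$ denotes the set of items arriving in rounds $1,\dots,\ell$. The greedy algorithm, given $L\subseteq U$, starts from $\emptyset$ and repeatedly adds an item of $L$ with maximum marginal increase $v(S\cup\{x\})-v(S)$ (ties broken by a fixed rule depending only on the items) until $\min(k,|L|)$ items are chosen; $\mathcal{A}(L)$ denotes its output. *)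

theory Defs
  imports "HOL-Probability.Probability" "HOL-Combinatorics.Multiset_Permutations"
begin

definition monotone_setfun :: "'a set \<Rightarrow> ('a set \<Rightarrow> real) \<Rightarrow> bool" where
  "monotone_setfun U v \<longleftrightarrow> (\<forall>A B. A \<subseteq> B \<and> B \<subseteq> U \<longrightarrow> v A \<le> v B)"

definition submodular_setfun :: "'a set \<Rightarrow> ('a set \<Rightarrow> real) \<Rightarrow> bool" where
  "submodular_setfun U v \<longleftrightarrow>
     (\<forall>A B x. A \<subseteq> B \<and> B \<subseteq> U \<and> x \<in> U - B \<longrightarrow>
        v (insert x B) - v B \<le> v (insert x A) - v A)"

definition nonneg_setfun :: "'a set \<Rightarrow> ('a set \<Rightarrow> real) \<Rightarrow> bool" where
  "nonneg_setfun U v \<longleftrightarrow> (\<forall>S. S \<subseteq> U \<longrightarrow> 0 \<le> v S)"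

definition greedy_cands :: "('a set \<Rightarrow> real) \<Rightarrow> 'a set \<Rightarrow> 'a set \<Rightarrow> 'a set" where
  "greedy_cands v L S =
     {x \<in> L - S. \<forall>y \<in> L - S. v (insert y S) - v S \<le> v (insert x S) - v S}"

definition greedy_step :: "('a set \<Rightarrow> real) \<Rightarrow> ('a set \<Rightarrow> 'a) \<Rightarrow> 'a set \<Rightarrow> 'a set \<Rightarrow> 'a set" where
  "greedy_step v tb L S = insert (tb (greedy_cands v L S)) S"

definition greedy :: "('a set \<Rightarrow> real) \<Rightarrow> ('a set \<Rightarrow> 'a) \<Rightarrow> nat \<Rightarrow> 'a set \<Rightarrow> 'a set" where
  "greedy v tb k L = (greedy_step v tb L ^^ min k (card L)) {}"

end

theory Submission
  imports Defs
begin

text \<open>Let L be the random prefix and T = OPT \<inter> L. Greedy with budget k on L closes the gap to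
  v(T) by a factor 1 - 1/|T| per step, and (1 - 1/|T|)^k \<le> |T|/(ek), so it recovers
  (1 - |T|/(ek)) v(T). Writing v(OPT) = v({}) + (\<Sum>x\<in>OPT. \<Delta> x) with nonnegative marginal
  weights that underestimate v on every subset of OPT, it remains to bound the expectations of
  1 - |T|/(ek) and of (1 - |T|/(ek)) [x \<in> L] from below by the coefficient of v(OPT) in the
  statement; this needs only P(x \<in> L) = l/n and P(x, y \<in> L) \<le> (l/n)^2 for x \<noteq> y.\<close>

lemma monotone_setfunD:
  "monotone_setfun U v \<Longrightarrow> A \<subseteq> B \<Longrightarrow> B \<subseteq> U \<Longrightarrow> v A \<le> v B"
  unfolding monotone_setfun_def by blast

lemma submodular_setfunD:
  "submodular_setfun U v \<Longrightarrow> A \<subseteq> B \<Longrightarrow> B \<subseteq> U \<Longrightarrow> x \<in> U \<Longrightarrow> x \<notin> B \<Longrightarrow>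
     v (insert x B) - v B \<le> v (insert x A) - v A"
  unfolding submodular_setfun_def by blast

lemma nonneg_setfunD:
  "nonneg_setfun U v \<Longrightarrow> S \<subseteq> U \<Longrightarrow> 0 \<le> v S"
  unfolding nonneg_setfun_def by blast

lemma submodular_union_le_sum_gains:
  assumes submod: "submodular_setfun U v" and "finite W"
    and "S \<subseteq> U" "W \<subseteq> U" "S \<inter> W = {}"
  shows "v (S \<union> W) \<le> v S + (\<Sum>t\<in>W. v (insert t S) - v S)"
  using \<open>finite W\<close> assms(3-5)
proof (induction W rule: finite_induct)
  case empty
  then show ?case by simp
next
  case (insert t W)
  then have "v (insert t (S \<union> W)) - v (S \<union> W) \<le> v (insert t S) - v S"
    by (intro submodular_setfunD[OF submod]) auto
  with insert show ?case by simp
qed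

text \<open>Adding the elements of X one at a time gives nonnegative weights summing to the total gain;
  by submodularity, each subset Y of X gains at least the weights of its elements.\<close>

lemma submodular_marginal_weights:
  assumes mono: "monotone_setfun U v" and submod: "submodular_setfun U v"
    and "finite X" "X \<subseteq> U"
  shows "\<exists>\<Delta>. (\<forall>x\<in>X. 0 \<le> \<Delta> x) \<and> v X = v {} + sum \<Delta> X
            \<and> (\<forall>Y. Y \<subseteq> X \<longrightarrow> v {} + sum \<Delta> Y \<le> v Y)"
  using \<open>finite X\<close> \<open>X \<subseteq> U\<close>
proof (induction X rule: finite_induct)
  case empty
  then show ?case by auto
next
  case (insert a X)
  then obtain \<Delta> where \<Delta>: "\<forall>x\<in>X. 0 \<le> \<Delta> x" "v X = v {} + sum \<Delta> X"
    "\<forall>Y. Y \<subseteq> X \<longrightarrow> v {} + sum \<Delta> Y \<le> v Y" by auto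
  define \<Delta>' where "\<Delta>' = \<Delta>(a := v (insert a X) - v X)"
  have sum_\<Delta>': "sum \<Delta>' Y = sum \<Delta> Y" if "Y \<subseteq> X" for Y
    using that insert.hyps(2) by (intro sum.cong) (auto simp: \<Delta>'_def)
  have "v X \<le> v (insert a X)"
    using insert.prems by (intro monotone_setfunD[OF mono]) auto
  then have "\<forall>x\<in>insert a X. 0 \<le> \<Delta>' x"
    using \<Delta>(1) insert.hyps(2) by (auto simp: \<Delta>'_def)
  moreover have "v (insert a X) = v {} + sum \<Delta>' (insert a X)"
    using insert.hyps \<Delta>(2) sum_\<Delta>'[of X] by (simp add: \<Delta>'_def)
  moreover have "v {} + sum \<Delta>' Y \<le> v Y" if Y: "Y \<subseteq> insert a X" for Y
  proof (cases "a \<in> Y")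
    case False
    then have "Y \<subseteq> X" using Y by auto
    then show ?thesis using \<Delta>(3) sum_\<Delta>'[of Y] by simp
  next
    case True
    define Y' where "Y' = Y - {a}"
    have Y': "Y' \<subseteq> X" "Y = insert a Y'" "a \<notin> Y'" "finite Y'"
      using Y True insert.hyps(1) by (auto simp: Y'_def intro: finite_subset)
    have "v (insert a X) - v X \<le> v (insert a Y') - v Y'"
      using insert Y'(1) by (intro submodular_setfunD[OF submod]) auto
    moreover have "v {} + sum \<Delta> Y' \<le> v Y'" using \<Delta>(3) Y'(1) by blast
    ultimately show ?thesis using Y' sum_\<Delta>'[of Y'] by (simp add: \<Delta>'_def)
  qed
  ultimately show ?case by (intro exI[of _ \<Delta>']) blast
qed

lemma greedy_cands_nonempty:
  assumes "finite L" "L - S \<noteq> {}"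
  shows "greedy_cands v L S \<noteq> {}"
proof -
  let ?gain = "\<lambda>y. v (insert y S) - v S"
  have "Max (?gain ` (L - S)) \<in> ?gain ` (L - S)"
    using assms by (intro Max_in) auto
  then obtain x where x: "x \<in> L - S" "?gain x = Max (?gain ` (L - S))" by auto
  have "?gain y \<le> ?gain x" if "y \<in> L - S" for y
  proof -
    have "?gain y \<le> Max (?gain ` (L - S))"
      using that assms(1) by (intro Max_ge) auto
    then show ?thesis using x(2) by linarith
  qed
  with x(1) show ?thesis unfolding greedy_cands_def by blast
qed

lemma greedy_step_best:
  assumes tb: "\<forall>T. T \<subseteq> U \<and> T \<noteq> {} \<longrightarrow> tb T \<in> T"
    and "L \<subseteq> U" "finite L" "L - S \<noteq> {}"
  obtains x where "x \<in> L - S" "greedy_step v tb L S = insert x S"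
    "\<And>y. y \<in> L - S \<Longrightarrow> v (insert y S) - v S \<le> v (insert x S) - v S"
proof -
  have "greedy_cands v L S \<subseteq> U" using assms(2) unfolding greedy_cands_def by auto
  then have "tb (greedy_cands v L S) \<in> greedy_cands v L S"
    using tb greedy_cands_nonempty[OF assms(3,4)] by blast
  then show ?thesis
    by (intro that) (auto simp: greedy_step_def greedy_cands_def)
qed

lemma greedy_iterate_subset_card:
  assumes tb: "\<forall>T. T \<subseteq> U \<and> T \<noteq> {} \<longrightarrow> tb T \<in> T"
    and "L \<subseteq> U" "finite L" "i \<le> card L"
  shows "(greedy_step v tb L ^^ i) {} \<subseteq> L \<and> card ((greedy_step v tb L ^^ i) {}) = i"
  using \<open>i \<le> card L\<close>
proof (induction i)
  case 0
  then show ?case by simp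
next
  case (Suc i)
  let ?S = "(greedy_step v tb L ^^ i) {}"
  have IH: "?S \<subseteq> L" "card ?S = i" using Suc.IH Suc.prems by simp_all
  have "finite ?S" using IH(1) \<open>finite L\<close> finite_subset by blast
  have "L - ?S \<noteq> {}"
    using card_mono[OF \<open>finite ?S\<close>, of L] IH(2) Suc.prems by auto
  then obtain x where "x \<in> L - ?S" "greedy_step v tb L ?S = insert x ?S"
    by (rule greedy_step_best[OF tb assms(2,3), where v = v]) blast
  then show ?case using IH \<open>finite ?S\<close> by simp
qed

text \<open>Submodularity bounds the gap to T by the gains of the elements of T, each at most the
  greedy gain.\<close>

lemma greedy_step_gain:
  assumes tb: "\<forall>T. T \<subseteq> U \<and> T \<noteq> {} \<longrightarrow> tb T \<in> T"
    and mono: "monotone_setfun U v" and submod: "submodular_setfun U v"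
    and "L \<subseteq> U" "finite L" "S \<subseteq> L" "L - S \<noteq> {}" "T \<subseteq> L"
  shows "v T - v S \<le> real (card T) * (v (greedy_step v tb L S) - v S)"
proof -
  obtain x where x: "x \<in> L - S" "greedy_step v tb L S = insert x S"
    and best: "\<And>y. y \<in> L - S \<Longrightarrow> v (insert y S) - v S \<le> v (insert x S) - v S"
    using greedy_step_best[OF tb assms(4,5,7), where v = v] by blast
  define \<delta> where "\<delta> = v (insert x S) - v S"
  have finT: "finite T" using assms(5,8) finite_subset by blast
  have "v S \<le> v (insert x S)"
    using assms(4,6) x(1) by (intro monotone_setfunD[OF mono]) auto
  then have "0 \<le> \<delta>" by (simp add: \<delta>_def)
  have "v T \<le> v (S \<union> (T - S))"
    using assms(4,6,8) by (intro monotone_setfunD[OF mono]) auto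
  also have "\<dots> \<le> v S + (\<Sum>t\<in>T - S. v (insert t S) - v S)"
    using assms(4,6,8) finT by (intro submodular_union_le_sum_gains[OF submod]) auto
  also have "\<dots> \<le> v S + (\<Sum>t\<in>T - S. \<delta>)"
    using best assms(8) unfolding \<delta>_def by (intro add_left_mono sum_mono) auto
  also have "\<dots> = v S + real (card (T - S)) * \<delta>" by simp
  also have "\<dots> \<le> v S + real (card T) * \<delta>"
    using \<open>0 \<le> \<delta>\<close> card_mono[OF finT, of "T - S"]
    by (intro add_left_mono mult_right_mono) auto
  finally show ?thesis using x(2) by (simp add: \<delta>_def)
qed

lemma greedy_iterate_gap:
  assumes tb: "\<forall>T. T \<subseteq> U \<and> T \<noteq> {} \<longrightarrow> tb T \<in> T"
    and mono: "monotone_setfun U v" and submod: "submodular_setfun U v"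
    and "L \<subseteq> U" "finite L" "T \<subseteq> L" "T \<noteq> {}" "i \<le> card L"
  shows "v T - v ((greedy_step v tb L ^^ i) {}) \<le> (1 - 1 / real (card T)) ^ i * (v T - v {})"
  using \<open>i \<le> card L\<close>
proof (induction i)
  case 0
  then show ?case by simp
next
  case (Suc i)
  let ?S = "\<lambda>i. (greedy_step v tb L ^^ i) {}"
  define m where "m = real (card T)"
  have "m \<ge> 1" using assms(5-7) finite_subset by (fastforce simp: m_def card_gt_0_iff Suc_le_eq)
  have "?S i \<subseteq> L" "card (?S i) = i"
    using greedy_iterate_subset_card[OF tb assms(4,5), where v = v] Suc.prems by auto
  moreover have "L - ?S i \<noteq> {}" using calculation Suc.prems by auto
  ultimately have "v T - v (?S i) \<le> m * (v (?S (Suc i)) - v (?S i))"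
    using greedy_step_gain[OF tb mono submod assms(4,5) _ _ assms(6), of "?S i"] Suc.prems
    by (simp add: m_def)
  then have "v T - v (?S (Suc i)) \<le> (1 - 1 / m) * (v T - v (?S i))"
    using \<open>m \<ge> 1\<close> by (simp add: field_simps)
  also have "\<dots> \<le> (1 - 1 / m) * ((1 - 1 / m) ^ i * (v T - v {}))"
    using Suc \<open>m \<ge> 1\<close> by (intro mult_left_mono) (auto simp: m_def)
  finally show ?case by (simp add: m_def)
qed

lemma one_minus_inverse_power_le:
  assumes "m \<ge> 1" "k \<ge> 1"
  shows "(1 - 1 / real m) ^ k \<le> real m / (exp 1 * real k)"
proof -
  define x where "x = real k / real m"
  have "x > 0" using assms by (simp add: x_def)
  have "(1 - 1 / real m) ^ k \<le> exp (- (1 / real m)) ^ k"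
    using exp_ge_add_one_self[of "- (1 / real m)"] assms(1) by (intro power_mono) auto
  also have "\<dots> = 1 / exp x"
    by (simp add: x_def exp_of_nat_mult[symmetric] exp_minus field_simps)
  also have "\<dots> \<le> 1 / (exp 1 * x)"
    using exp_ge_add_one_self[of "x - 1"] \<open>x > 0\<close>
    by (intro divide_left_mono) (auto simp: exp_diff field_simps)
  also have "\<dots> = real m / (exp 1 * real k)" using assms by (simp add: x_def)
  finally show ?thesis .
qed

definition greedy_ratio :: "nat \<Rightarrow> 'a set \<Rightarrow> real" where
  "greedy_ratio k T = 1 - real (card T) / (exp 1 * real k)"

lemma greedy_ratio_nonneg:
  assumes "card T \<le> k"
  shows "0 \<le> greedy_ratio k T"
proof -
  have "real (card T) \<le> exp 1 * real k"
    using assms mult_right_mono[OF one_le_exp_iff[of 1, THEN iffD2], of "real k"] by simp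
  then show ?thesis by (cases "k = 0") (auto simp: greedy_ratio_def divide_le_eq_1)
qed

theorem greedy_approximation:
  assumes tb: "\<forall>T. T \<subseteq> U \<and> T \<noteq> {} \<longrightarrow> tb T \<in> T"
    and mono: "monotone_setfun U v" and submod: "submodular_setfun U v"
    and nonneg: "nonneg_setfun U v"
    and "finite L" "L \<subseteq> U" "T \<subseteq> L" "card T \<le> k" "k \<ge> 1"
  shows "greedy_ratio k T * v T \<le> v (greedy v tb k L)"
proof -
  let ?S = "\<lambda>i. (greedy_step v tb L ^^ i) {}"
  have greedy_eq: "greedy v tb k L = ?S (min k (card L))" unfolding greedy_def ..
  have "?S (min k (card L)) \<subseteq> L"
    using greedy_iterate_subset_card[OF tb assms(6,5), where v = v] by simp
  then have v_empty: "v {} \<le> v (greedy v tb k L)"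
    using assms(6) greedy_eq by (intro monotone_setfunD[OF mono]) auto
  have "0 \<le> v T" "0 \<le> v {}" using assms(6,7) by (auto intro: nonneg_setfunD[OF nonneg])
  consider "T = {}" | "card L \<le> k" | "T \<noteq> {}" "k < card L" by linarith
  then show ?thesis
  proof cases
    case 1
    then show ?thesis using v_empty by (simp add: greedy_ratio_def)
  next
    case 2
    have "?S (card L) \<subseteq> L \<and> card (?S (card L)) = card L"
      using greedy_iterate_subset_card[OF tb assms(6,5), where v = v] by blast
    then have "greedy v tb k L = L"
      using 2 greedy_eq \<open>finite L\<close> card_subset_eq by (metis min_absorb2)
    then have "v T \<le> v (greedy v tb k L)"
      using monotone_setfunD[OF mono assms(7,6)] by simp
    moreover have "greedy_ratio k T * v T \<le> v T"
      using \<open>0 \<le> v T\<close> by (simp add: greedy_ratio_def algebra_simps)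
    ultimately show ?thesis by linarith
  next
    case 3
    have "card T \<ge> 1" using 3 assms(5,7) finite_subset by (fastforce simp: card_gt_0_iff Suc_le_eq)
    have "v T - v (?S k) \<le> (1 - 1 / real (card T)) ^ k * (v T - v {})"
      using 3 by (intro greedy_iterate_gap[OF tb mono submod assms(6,5,7)]) auto
    also have "\<dots> \<le> (1 - 1 / real (card T)) ^ k * v T"
      using \<open>0 \<le> v {}\<close> \<open>card T \<ge> 1\<close> by (intro mult_left_mono) auto
    also have "\<dots> \<le> real (card T) / (exp 1 * real k) * v T"
      using one_minus_inverse_power_le[OF \<open>card T \<ge> 1\<close> \<open>k \<ge> 1\<close>] \<open>0 \<le> v T\<close>
      by (rule mult_right_mono)
    moreover have "greedy v tb k L = ?S k" using 3 greedy_eq by simp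
    ultimately show ?thesis by (simp add: greedy_ratio_def left_diff_distrib)
  qed
qed

lemma greedy_approximation_weights:
  assumes tb: "\<forall>T. T \<subseteq> U \<and> T \<noteq> {} \<longrightarrow> tb T \<in> T"
    and mono: "monotone_setfun U v" and submod: "submodular_setfun U v"
    and nonneg: "nonneg_setfun U v"
    and "finite L" "L \<subseteq> U" "finite X" "card X \<le> k" "k \<ge> 1"
    and weights: "\<And>Y. Y \<subseteq> X \<Longrightarrow> w + sum \<Delta> Y \<le> v Y"
  shows "greedy_ratio k (X \<inter> L) * (w + (\<Sum>x\<in>X. \<Delta> x * of_bool (x \<in> L))) \<le> v (greedy v tb k L)"
proof -
  have "card (X \<inter> L) \<le> k" using card_mono[OF \<open>finite X\<close>, of "X \<inter> L"] assms(8) by simp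
  moreover have "w + (\<Sum>x\<in>X. \<Delta> x * of_bool (x \<in> L)) \<le> v (X \<inter> L)"
    using weights[of "X \<inter> L"] \<open>finite X\<close> by simp
  ultimately have "greedy_ratio k (X \<inter> L) * (w + (\<Sum>x\<in>X. \<Delta> x * of_bool (x \<in> L)))
      \<le> greedy_ratio k (X \<inter> L) * v (X \<inter> L)"
    by (intro mult_left_mono greedy_ratio_nonneg)
  also have "\<dots> \<le> v (greedy v tb k L)"
    using assms(5,6,9) \<open>card (X \<inter> L) \<le> k\<close>
    by (intro greedy_approximation[OF tb mono submod nonneg]) auto
  finally show ?thesis .
qed

lemma sum_permutations_prefix_permutes:
  assumes "\<pi> permutes U"
  shows "(\<Sum>\<sigma>\<in>permutations_of_set U. f (set (take l \<sigma>)))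
       = (\<Sum>\<sigma>\<in>permutations_of_set U. f (\<pi> ` set (take l \<sigma>)))"
proof -
  have "inj_on (map \<pi>) (permutations_of_set U)"
    using permutes_inj[OF assms] by (auto intro!: inj_onI simp: inj_eq)
  then have "(\<Sum>\<sigma>\<in>permutations_of_set U. f (set (take l \<sigma>)))
      = (\<Sum>\<sigma>\<in>permutations_of_set U. f (set (take l (map \<pi> \<sigma>))))"
    using sum.reindex[of "map \<pi>" "permutations_of_set U"] permutations_of_set_image_permutes[OF assms]
    by (simp add: comp_def)
  also have "\<dots> = (\<Sum>\<sigma>\<in>permutations_of_set U. f (\<pi> ` set (take l \<sigma>)))"
    by (simp add: take_map)
  finally show ?thesis .
qed

lemma prefix_of_permutation:
  assumes "\<sigma> \<in> permutations_of_set U" "l \<le> card U"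
  shows "set (take l \<sigma>) \<subseteq> U" "card (set (take l \<sigma>)) = l"
proof -
  have "distinct \<sigma>" "set \<sigma> = U" "length \<sigma> = card U"
    using permutations_of_setD[OF assms(1)] length_finite_permutations_of_set[OF assms(1)] by auto
  then show "set (take l \<sigma>) \<subseteq> U" "card (set (take l \<sigma>)) = l"
    using assms(2) by (auto simp: distinct_card dest: in_set_takeD)
qed

text \<open>By symmetry under transpositions every item lies in the same number of prefixes, and
  double counting gives the total.\<close>

lemma sum_prefix_indicator:
  assumes "finite U" "a \<in> U" "l \<le> card U"
  shows "(\<Sum>\<sigma>\<in>permutations_of_set U. of_bool (a \<in> set (take l \<sigma>)) :: real)
       = real (card (permutations_of_set U)) * real l / real (card U)"
proof -
  let ?P = "permutations_of_set U"
  define count where "count b = (\<Sum>\<sigma>\<in>?P. of_bool (b \<in> set (take l \<sigma>)) :: real)" for b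
  have count_eq: "count b = count a" if "b \<in> U" for b
  proof -
    have "count b = (\<Sum>\<sigma>\<in>?P. of_bool (b \<in> Transposition.transpose a b ` set (take l \<sigma>)))"
      unfolding count_def
      using sum_permutations_prefix_permutes[OF permutes_swap_id[OF assms(2) that]] .
    also have "\<dots> = count a" by (simp add: count_def in_transpose_image_iff)
    finally show ?thesis .
  qed
  have "(\<Sum>b\<in>U. count b) = (\<Sum>\<sigma>\<in>?P. \<Sum>b\<in>U. of_bool (b \<in> set (take l \<sigma>)) :: real)"
    unfolding count_def by (rule sum.swap)
  also have "\<dots> = (\<Sum>\<sigma>\<in>?P. real l)"
    using prefix_of_permutation[OF _ assms(3)] assms(1) by (intro sum.cong) (auto simp: Int_absorb1)
  finally have "real (card U) * count a = real (card ?P) * real l"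
    using count_eq by simp
  moreover have "card U > 0" using assms(1,2) card_gt_0_iff by blast
  ultimately show ?thesis by (simp add: count_def field_simps)
qed

lemma sum_prefix_pair_indicator_le:
  assumes "finite U" "a \<in> U" "b \<in> U" "a \<noteq> b" "l \<le> card U"
  shows "(\<Sum>\<sigma>\<in>permutations_of_set U. of_bool (a \<in> set (take l \<sigma>) \<and> b \<in> set (take l \<sigma>)) :: real)
       \<le> real (card (permutations_of_set U)) * (real l / real (card U))\<^sup>2"
proof -
  let ?P = "permutations_of_set U"
  define n where "n = real (card U)"
  define count where
    "count c = (\<Sum>\<sigma>\<in>?P. of_bool (a \<in> set (take l \<sigma>) \<and> c \<in> set (take l \<sigma>)) :: real)" for c
  have count_eq: "count c = count b" if "c \<in> U - {a}" for c
  proof -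
    have "count c = (\<Sum>\<sigma>\<in>?P. of_bool (a \<in> Transposition.transpose b c ` set (take l \<sigma>)
                                      \<and> c \<in> Transposition.transpose b c ` set (take l \<sigma>)))"
      unfolding count_def using that assms(3)
      by (intro sum_permutations_prefix_permutes permutes_swap_id) auto
    moreover have "Transposition.transpose b c a = a"
      using that assms(4) by (auto intro: transpose_apply_other)
    ultimately show ?thesis by (simp add: count_def in_transpose_image_iff)
  qed
  have "(\<Sum>c\<in>U - {a}. count c)
      = (\<Sum>\<sigma>\<in>?P. \<Sum>c\<in>U - {a}. of_bool (a \<in> set (take l \<sigma>) \<and> c \<in> set (take l \<sigma>)) :: real)"
    unfolding count_def by (rule sum.swap)
  also have "\<dots> = (\<Sum>\<sigma>\<in>?P. (real l - 1) * of_bool (a \<in> set (take l \<sigma>)))"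
  proof (intro sum.cong refl)
    fix \<sigma> assume "\<sigma> \<in> ?P"
    note prefix = prefix_of_permutation[OF this assms(5)]
    show "(\<Sum>c\<in>U - {a}. of_bool (a \<in> set (take l \<sigma>) \<and> c \<in> set (take l \<sigma>)) :: real)
        = (real l - 1) * of_bool (a \<in> set (take l \<sigma>))"
    proof (cases "a \<in> set (take l \<sigma>)")
      case True
      then have "(U - {a}) \<inter> {c. c \<in> set (take l \<sigma>)} = set (take l \<sigma>) - {a}" "l \<ge> 1"
        using prefix by (auto simp: Suc_le_eq intro!: Nat.gr0I)
      then show ?thesis using True prefix assms(1) by (simp add: of_nat_diff)
    qed simp
  qed
  also have "\<dots> = (real l - 1) * (real (card ?P) * real l / n)"
    using sum_prefix_indicator[OF assms(1,2,5)] by (simp add: sum_distrib_left n_def)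
  moreover have "(\<Sum>c\<in>U - {a}. count c) = real (card (U - {a})) * count b"
    using count_eq by simp
  moreover have "card U > 0" using assms(1,2) card_gt_0_iff by blast
  then have "real (card (U - {a})) = n - 1" using assms(1,2) by (simp add: n_def of_nat_diff)
  ultimately have "(n - 1) * count b = (real l - 1) * (real (card ?P) * real l / n)" by simp
  moreover have "n \<ge> 2"
    using card_mono[OF assms(1), of "{a, b}"] assms(2-4) by (simp add: n_def)
  ultimately have "count b = (real l - 1) / (n - 1) * (real (card ?P) * real l / n)"
    by (simp add: field_simps)
  also have "\<dots> \<le> real l / n * (real (card ?P) * real l / n)"
    using \<open>n \<ge> 2\<close> assms(5) by (intro mult_right_mono) (auto simp: n_def field_simps)
  finally show ?thesis by (simp add: count_def n_def power2_eq_square mult_ac)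
qed

lemma sum_card_inter_prefix:
  assumes "finite U" "X \<subseteq> U" "l \<le> card U"
  shows "(\<Sum>\<sigma>\<in>permutations_of_set U. real (card (X \<inter> set (take l \<sigma>))))
       = real (card X) * (real (card (permutations_of_set U)) * real l / real (card U))"
proof -
  have "finite X" using assms(1,2) finite_subset by blast
  then have "(\<Sum>\<sigma>\<in>permutations_of_set U. real (card (X \<inter> set (take l \<sigma>))))
      = (\<Sum>x\<in>X. \<Sum>\<sigma>\<in>permutations_of_set U. of_bool (x \<in> set (take l \<sigma>)))"
    by (subst sum.swap) (simp add: Int_def)
  also have "\<dots> = real (card X) * (real (card (permutations_of_set U)) * real l / real (card U))"
    using sum_prefix_indicator[OF assms(1) _ assms(3)] assms(2) by (simp add: subset_iff)
  finally show ?thesis .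
qed

lemma sum_card_inter_prefix_indicator_le:
  assumes "finite U" "X \<subseteq> U" "x \<in> X" "l \<le> card U"
  defines "p \<equiv> real l / real (card U)"
  shows "(\<Sum>\<sigma>\<in>permutations_of_set U. real (card (X \<inter> set (take l \<sigma>))) * of_bool (x \<in> set (take l \<sigma>)))
       \<le> real (card (permutations_of_set U)) * p + real (card X) * (real (card (permutations_of_set U)) * p\<^sup>2)"
proof -
  let ?P = "permutations_of_set U"
  define pair where
    "pair y = (\<Sum>\<sigma>\<in>?P. of_bool (x \<in> set (take l \<sigma>) \<and> y \<in> set (take l \<sigma>)) :: real)" for y
  have "finite X" using assms(1,2) finite_subset by blast
  then have "real (card (X \<inter> set (take l \<sigma>))) * of_bool (x \<in> set (take l \<sigma>))
      = (\<Sum>y\<in>X. of_bool (x \<in> set (take l \<sigma>) \<and> y \<in> set (take l \<sigma>)))" for \<sigma>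
    by (cases "x \<in> set (take l \<sigma>)") simp_all
  then have "(\<Sum>\<sigma>\<in>?P. real (card (X \<inter> set (take l \<sigma>))) * of_bool (x \<in> set (take l \<sigma>)))
      = (\<Sum>\<sigma>\<in>?P. \<Sum>y\<in>X. of_bool (x \<in> set (take l \<sigma>) \<and> y \<in> set (take l \<sigma>)))"
    by (intro sum.cong) simp_all
  also have "\<dots> = (\<Sum>y\<in>X. pair y)"
    unfolding pair_def by (rule sum.swap)
  also have "\<dots> = pair x + (\<Sum>y\<in>X - {x}. pair y)"
    using \<open>finite X\<close> assms(3) by (simp add: sum.remove)
  also have "\<dots> \<le> real (card ?P) * p + (\<Sum>y\<in>X - {x}. real (card ?P) * p\<^sup>2)"
  proof (intro add_mono sum_mono)
    show "pair x \<le> real (card ?P) * p"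
      using sum_prefix_indicator[OF assms(1) _ assms(4), of x] assms(2,3)
      by (auto simp: pair_def p_def)
    show "pair y \<le> real (card ?P) * p\<^sup>2" if "y \<in> X - {x}" for y
      using sum_prefix_pair_indicator_le[OF assms(1) _ _ _ assms(4), of x y] that assms(2,3)
      by (auto simp: pair_def p_def)
  qed
  also have "\<dots> \<le> real (card ?P) * p + real (card X) * (real (card ?P) * p\<^sup>2)"
    using card_Diff1_le[of X x] by (simp add: mult_right_mono)
  finally show ?thesis .
qed

lemma sum_greedy_ratio_prefix_ge:
  assumes "finite U" "X \<subseteq> U" "card X \<le> k" "k \<ge> 1" "l \<le> card U"
  defines "p \<equiv> real l / real (card U)"
  shows "real (card (permutations_of_set U)) * (p * (1 - p / exp 1 - 1 / (exp 1 * real k)))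
       \<le> (\<Sum>\<sigma>\<in>permutations_of_set U. greedy_ratio k (X \<inter> set (take l \<sigma>)))"
proof -
  let ?N = "real (card (permutations_of_set U))"
  have "0 \<le> p" "p \<le> 1" using assms(5) by (auto simp: p_def divide_le_eq_1)
  have "(\<Sum>\<sigma>\<in>permutations_of_set U. greedy_ratio k (X \<inter> set (take l \<sigma>)))
      = ?N - real (card X) * (?N * p) / (exp 1 * real k)"
    using sum_card_inter_prefix[OF assms(1,2,5)]
    by (simp add: greedy_ratio_def sum_subtractf sum_divide_distrib[symmetric] p_def)
  also have "\<dots> \<ge> ?N - real k * (?N * p) / (exp 1 * real k)"
    using assms(3) \<open>0 \<le> p\<close> by (intro diff_left_mono divide_right_mono mult_right_mono) auto
  finally have "?N * (1 - p / exp 1) \<le> (\<Sum>\<sigma>\<in>permutations_of_set U. greedy_ratio k (X \<inter> set (take l \<sigma>)))"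
    using assms(4) by (simp add: field_simps)
  moreover have "p * (1 - p / exp 1 - 1 / (exp 1 * real k)) \<le> 1 - p / exp 1"
  proof -
    have "p \<le> exp 1" using \<open>p \<le> 1\<close> one_le_exp_iff[of 1] by linarith
    then have "p / exp 1 \<le> 1" by (simp add: divide_le_eq_1)
    then have "p * (1 - p / exp 1) \<le> 1 - p / exp 1"
      using \<open>0 \<le> p\<close> \<open>p \<le> 1\<close> by (intro mult_left_le_one_le) auto
    moreover have "0 \<le> p / (exp 1 * real k)" using \<open>0 \<le> p\<close> by simp
    ultimately show ?thesis by (simp add: right_diff_distrib)
  qed
  ultimately show ?thesis by (meson mult_left_mono of_nat_0_le_iff order_trans)
qed

lemma sum_greedy_ratio_prefix_indicator_ge:
  assumes "finite U" "X \<subseteq> U" "card X \<le> k" "k \<ge> 1" "x \<in> X" "l \<le> card U"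
  defines "p \<equiv> real l / real (card U)"
  shows "real (card (permutations_of_set U)) * (p * (1 - p / exp 1 - 1 / (exp 1 * real k)))
       \<le> (\<Sum>\<sigma>\<in>permutations_of_set U.
              greedy_ratio k (X \<inter> set (take l \<sigma>)) * of_bool (x \<in> set (take l \<sigma>)))"
proof -
  let ?P = "permutations_of_set U" and ?N = "real (card (permutations_of_set U))"
  let ?hit = "\<lambda>\<sigma>. of_bool (x \<in> set (take l \<sigma>)) :: real"
  have "0 \<le> p" by (simp add: p_def)
  have "real k > 0" using assms(4) by simp
  then have "?N * (p * (1 - p / exp 1 - 1 / (exp 1 * real k)))
      = ?N * p - (?N * p + real k * (?N * p\<^sup>2)) / (exp 1 * real k)"
    by (simp add: field_simps power2_eq_square)
  also have "\<dots> \<le> (\<Sum>\<sigma>\<in>?P. ?hit \<sigma>)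
        - (\<Sum>\<sigma>\<in>?P. real (card (X \<inter> set (take l \<sigma>))) * ?hit \<sigma>) / (exp 1 * real k)"
  proof (intro diff_mono divide_right_mono)
    show "?N * p \<le> (\<Sum>\<sigma>\<in>?P. ?hit \<sigma>)"
      using sum_prefix_indicator[OF assms(1) _ assms(6), of x] assms(2,5) by (auto simp: p_def)
    have "real (card X) * (?N * p\<^sup>2) \<le> real k * (?N * p\<^sup>2)"
      using assms(3) by (intro mult_right_mono) auto
    then show "(\<Sum>\<sigma>\<in>?P. real (card (X \<inter> set (take l \<sigma>))) * ?hit \<sigma>) \<le> ?N * p + real k * (?N * p\<^sup>2)"
      using sum_card_inter_prefix_indicator_le[OF assms(1,2,5,6)] by (simp add: p_def)
  qed simp
  also have "\<dots> = (\<Sum>\<sigma>\<in>?P. greedy_ratio k (X \<inter> set (take l \<sigma>)) * ?hit \<sigma>)"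
    by (simp add: greedy_ratio_def left_diff_distrib sum_subtractf sum_divide_distrib
        del: sum_mult_of_bool_eq sum_of_bool_eq)
  finally show ?thesis .
qed

lemma sum_weighted_lower_bound:
  fixes F g :: "'s \<Rightarrow> real" and \<Delta> :: "'b \<Rightarrow> real" and h :: "'b \<Rightarrow> 's \<Rightarrow> real"
  assumes pointwise: "\<And>\<sigma>. \<sigma> \<in> P \<Longrightarrow> g \<sigma> * (w + (\<Sum>x\<in>X. \<Delta> x * h x \<sigma>)) \<le> F \<sigma>"
    and "0 \<le> w" "\<And>x. x \<in> X \<Longrightarrow> 0 \<le> \<Delta> x"
    and "c \<le> sum g P" "\<And>x. x \<in> X \<Longrightarrow> c \<le> (\<Sum>\<sigma>\<in>P. g \<sigma> * h x \<sigma>)"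
  shows "c * (w + sum \<Delta> X) \<le> sum F P"
proof -
  have "c * (w + sum \<Delta> X) = c * w + (\<Sum>x\<in>X. \<Delta> x * c)"
    by (simp add: algebra_simps sum_distrib_left)
  also have "\<dots> \<le> sum g P * w + (\<Sum>x\<in>X. \<Delta> x * (\<Sum>\<sigma>\<in>P. g \<sigma> * h x \<sigma>))"
    using assms(2-5) by (intro add_mono sum_mono mult_right_mono mult_left_mono) auto
  also have "\<dots> = (\<Sum>\<sigma>\<in>P. g \<sigma> * w + (\<Sum>x\<in>X. \<Delta> x * (g \<sigma> * h x \<sigma>)))"
    by (simp add: sum.distrib sum_distrib_left sum_distrib_right sum.swap[of _ X])
  also have "\<dots> = (\<Sum>\<sigma>\<in>P. g \<sigma> * (w + (\<Sum>x\<in>X. \<Delta> x * h x \<sigma>)))"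
    by (simp add: distrib_left sum_distrib_left mult.left_commute)
  also have "\<dots> \<le> sum F P" using pointwise by (rule sum_mono)
  finally show ?thesis .
qed

theorem mainTheorem5:
  fixes U :: "'a set" and v :: "'a set \<Rightarrow> real" and k l :: nat
    and tb :: "'a set \<Rightarrow> 'a" and OPT :: "'a set"
  assumes finU: "finite U"
    and k: "k \<ge> 1"
    and nonneg: "nonneg_setfun U v"
    and mono: "monotone_setfun U v"
    and submod: "submodular_setfun U v"
    and tb: "\<forall>T. T \<subseteq> U \<and> T \<noteq> {} \<longrightarrow> tb T \<in> T"
    and OPT_sub: "OPT \<subseteq> U" and OPT_card: "card OPT \<le> k"
    and OPT_max: "\<forall>S. S \<subseteq> U \<and> card S \<le> k \<longrightarrow> v S \<le> v OPT"
    and hl: "l \<in> {1..card U}"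
  shows "measure_pmf.expectation (pmf_of_set (permutations_of_set U))
           (\<lambda>\<sigma>. v (greedy v tb k (set (take l \<sigma>))))
         \<ge> (1 - real l / (exp 1 * real (card U)) - 1 / (exp 1 * real k))
             * (real l / real (card U)) * v OPT"
proof -
  let ?P = "permutations_of_set U" and ?pre = "\<lambda>\<sigma>::'a list. set (take l \<sigma>)"
  define p where "p = real l / real (card U)"
  define c where "c = real (card ?P) * (p * (1 - p / exp 1 - 1 / (exp 1 * real k)))"
  have "l \<le> card U" "finite OPT" using hl finU OPT_sub finite_subset by auto
  obtain \<Delta> where \<Delta>: "\<forall>x\<in>OPT. 0 \<le> \<Delta> x" "v OPT = v {} + sum \<Delta> OPT"
    "\<forall>Y. Y \<subseteq> OPT \<longrightarrow> v {} + sum \<Delta> Y \<le> v Y"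
    using submodular_marginal_weights[OF mono submod \<open>finite OPT\<close> OPT_sub] by blast
  have "c * v OPT \<le> (\<Sum>\<sigma>\<in>?P. v (greedy v tb k (?pre \<sigma>)))"
    unfolding \<Delta>(2) c_def p_def
  proof (rule sum_weighted_lower_bound[where h = "\<lambda>x \<sigma>. of_bool (x \<in> ?pre \<sigma>)"])
    show "greedy_ratio k (OPT \<inter> ?pre \<sigma>) * (v {} + (\<Sum>x\<in>OPT. \<Delta> x * of_bool (x \<in> ?pre \<sigma>)))
        \<le> v (greedy v tb k (?pre \<sigma>))" if "\<sigma> \<in> ?P" for \<sigma>
      using prefix_of_permutation[OF that \<open>l \<le> card U\<close>] \<Delta>(3) \<open>finite OPT\<close> OPT_card k
      by (intro greedy_approximation_weights[OF tb mono submod nonneg]) auto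
  qed (use \<Delta>(1) nonneg_setfunD[OF nonneg, of "{}"]
        sum_greedy_ratio_prefix_ge[OF finU OPT_sub OPT_card k \<open>l \<le> card U\<close>]
        sum_greedy_ratio_prefix_indicator_ge[OF finU OPT_sub OPT_card k _ \<open>l \<le> card U\<close>] in auto)
  moreover have "real (card ?P) > 0" using finU by simp
  moreover have "measure_pmf.expectation (pmf_of_set ?P) (\<lambda>\<sigma>. v (greedy v tb k (?pre \<sigma>)))
      = (\<Sum>\<sigma>\<in>?P. v (greedy v tb k (?pre \<sigma>))) / real (card ?P)"
    using finU by (simp add: integral_pmf_of_set)
  moreover have "(1 - real l / (exp 1 * real (card U)) - 1 / (exp 1 * real k)) * (real l / real (card U))
      = c / real (card ?P)"
    using \<open>real (card ?P) > 0\<close> by (simp add: c_def p_def ac_simps)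
  ultimately show ?thesis by (simp add: divide_right_mono)
qed

end
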